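(* Let $\mathfrak h\subseteq\Phi^+$ be a Hessenberg set, let $w,v\in W$ and suppose $v$ is a cover of $w$, with $v=s_\alpha w$, $\alpha\in\Phi^+$. Let $\beta\in N_v$. Then: (1) if $\beta\in s_\alpha N_w\cap\Phi^+$, then $\beta\in N^{\mathfrak h}_v$ if and only if $s_\alpha\beta\in N^{\mathfrak h}_w$; (2) if $\beta\in N_w\cap s_\alpha\Phi^-$ and $\beta\in N^{\mathfrak h}_v$, then $\beta\in N^{\mathfrak h}_w$.
   Context: $\Phi$ is a crystallographic root system in a real Euclidean space with base $\Delta$, positive roots $\Phi^+$, $\Phi^-=-\Phi^+$, Weyl group $W$ with length function $\ell$, and $s_\alpha$ the reflection through $\alpha$. Write $\alpha\prec\beta$ if $\beta-\alpha$ is a sum of positive roots. A Hessenberg set is a subset $\mathfrak h\subseteq\Phi^+$ whose complement in $\Phi^+$ is upward closed for $\prec$. For $w\in W$, $N_w=\{\alpha\in\Phi^+: w^{-1}\alpha\in\Phi^-\}$ and $N^{\mathfrak h}_w=\{\alpha\in\Phi^+: w^{-1}\alpha\in-\mathfrak h\}$. For $\alpha\in\Phi^+$ the Bruhat graph has an edge $u\to s_\alpha u$ when $(s_\alpha u)^{-1}\alpha\in\Phi^-$. We say $v$ is a cover of $w$ if $v=s_\alpha w$ for some $\alpha\in\Phi^+$ with $w\to v$ an edge of the Bruhat graph and $\ell(v)=\ell(w)+1$. *)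

theory Defs
  imports "HOL-Analysis.Analysis"
begin

definition reflection :: "'a::euclidean_space \<Rightarrow> 'a \<Rightarrow> 'a" where
  "reflection \<alpha> x = x - ((2 * (x \<bullet> \<alpha>)) / (\<alpha> \<bullet> \<alpha>)) *\<^sub>R \<alpha>"

definition crystallographic_root_system :: "'a::euclidean_space set \<Rightarrow> bool" where
  "crystallographic_root_system \<Phi> \<longleftrightarrow>
     finite \<Phi> \<and> 0 \<notin> \<Phi> \<and> span \<Phi> = UNIV \<and>
     (\<forall>\<alpha>\<in>\<Phi>. \<forall>c::real. c *\<^sub>R \<alpha> \<in> \<Phi> \<longleftrightarrow> c = 1 \<or> c = -1) \<and>
     (\<forall>\<alpha>\<in>\<Phi>. \<forall>\<beta>\<in>\<Phi>. reflection \<alpha> \<beta> \<in> \<Phi>) \<and>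
     (\<forall>\<alpha>\<in>\<Phi>. \<forall>\<beta>\<in>\<Phi>. 2 * (\<beta> \<bullet> \<alpha>) / (\<alpha> \<bullet> \<alpha>) \<in> \<int>)"

definition is_base :: "'a::euclidean_space set \<Rightarrow> 'a set \<Rightarrow> bool" where
  "is_base \<Phi> \<Delta> \<longleftrightarrow> \<Delta> \<subseteq> \<Phi> \<and> independent \<Delta> \<and>
     (\<forall>\<beta>\<in>\<Phi>. \<exists>c::'a \<Rightarrow> int. \<beta> = (\<Sum>\<alpha>\<in>\<Delta>. of_int (c \<alpha>) *\<^sub>R \<alpha>) \<and>
        ((\<forall>\<alpha>\<in>\<Delta>. c \<alpha> \<ge> 0) \<or> (\<forall>\<alpha>\<in>\<Delta>. c \<alpha> \<le> 0)))"

definition pos_roots :: "'a::euclidean_space set \<Rightarrow> 'a set \<Rightarrow> 'a set" where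
  "pos_roots \<Phi> \<Delta> = {\<beta>\<in>\<Phi>. \<exists>c::'a \<Rightarrow> int. \<beta> = (\<Sum>\<alpha>\<in>\<Delta>. of_int (c \<alpha>) *\<^sub>R \<alpha>) \<and>
        (\<forall>\<alpha>\<in>\<Delta>. c \<alpha> \<ge> 0)}"

definition neg_roots :: "'a::euclidean_space set \<Rightarrow> 'a set \<Rightarrow> 'a set" where
  "neg_roots \<Phi> \<Delta> = uminus ` pos_roots \<Phi> \<Delta>"

inductive_set weyl_group :: "'a::euclidean_space set \<Rightarrow> ('a \<Rightarrow> 'a) set" for \<Phi> where
  id: "id \<in> weyl_group \<Phi>"
| step: "w \<in> weyl_group \<Phi> \<Longrightarrow> \<alpha> \<in> \<Phi> \<Longrightarrow> reflection \<alpha> \<circ> w \<in> weyl_group \<Phi>"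

definition weyl_length :: "'a::euclidean_space set \<Rightarrow> ('a \<Rightarrow> 'a) \<Rightarrow> nat" where
  "weyl_length \<Delta> w = (LEAST n. \<exists>as. length as = n \<and> set as \<subseteq> \<Delta> \<and>
       w = foldr (\<lambda>a f. reflection a \<circ> f) as id)"

definition root_prec :: "'a::euclidean_space set \<Rightarrow> 'a set \<Rightarrow> 'a \<Rightarrow> 'a \<Rightarrow> bool" where
  "root_prec \<Phi> \<Delta> \<alpha> \<beta> \<longleftrightarrow> (\<exists>xs. set xs \<subseteq> pos_roots \<Phi> \<Delta> \<and> \<beta> - \<alpha> = sum_list xs)"

definition hessenberg_set :: "'a::euclidean_space set \<Rightarrow> 'a set \<Rightarrow> 'a set \<Rightarrow> bool" where
  "hessenberg_set \<Phi> \<Delta> h \<longleftrightarrow> h \<subseteq> pos_roots \<Phi> \<Delta> \<and>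
     (\<forall>\<gamma>\<in>pos_roots \<Phi> \<Delta> - h. \<forall>\<delta>\<in>pos_roots \<Phi> \<Delta>.
        root_prec \<Phi> \<Delta> \<gamma> \<delta> \<longrightarrow> \<delta> \<in> pos_roots \<Phi> \<Delta> - h)"

definition inv_set :: "'a::euclidean_space set \<Rightarrow> 'a set \<Rightarrow> ('a \<Rightarrow> 'a) \<Rightarrow> 'a set" where
  "inv_set \<Phi> \<Delta> w = {\<alpha>\<in>pos_roots \<Phi> \<Delta>. inv w \<alpha> \<in> neg_roots \<Phi> \<Delta>}"

definition hess_inv_set :: "'a::euclidean_space set \<Rightarrow> 'a set \<Rightarrow> 'a set \<Rightarrow> ('a \<Rightarrow> 'a) \<Rightarrow> 'a set" where
  "hess_inv_set \<Phi> \<Delta> h w = {\<alpha>\<in>pos_roots \<Phi> \<Delta>. inv w \<alpha> \<in> uminus ` h}"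

definition bruhat_edge :: "'a::euclidean_space set \<Rightarrow> 'a set \<Rightarrow> 'a \<Rightarrow> ('a \<Rightarrow> 'a) \<Rightarrow> bool" where
  "bruhat_edge \<Phi> \<Delta> \<alpha> u \<longleftrightarrow> \<alpha> \<in> pos_roots \<Phi> \<Delta> \<and>
     inv (reflection \<alpha> \<circ> u) \<alpha> \<in> neg_roots \<Phi> \<Delta>"

definition is_cover :: "'a::euclidean_space set \<Rightarrow> 'a set \<Rightarrow> ('a \<Rightarrow> 'a) \<Rightarrow> 'a \<Rightarrow> ('a \<Rightarrow> 'a) \<Rightarrow> bool" where
  "is_cover \<Phi> \<Delta> v \<alpha> w \<longleftrightarrow> \<alpha> \<in> pos_roots \<Phi> \<Delta> \<and> v = reflection \<alpha> \<circ> w \<and>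
     bruhat_edge \<Phi> \<Delta> \<alpha> w \<and> weyl_length \<Delta> v = weyl_length \<Delta> w + 1"

end

theory Submission
  imports Defs
begin

(* Part (1) is a rewriting of the definitions, since (s_a w)^-1 = w^-1 s_a.
   For part (2) write s_a b = b - m a.  Since s_a b is negative while a and b are positive,
   m >= 1.  The Bruhat edge w -> s_a w says that w^-1 a is positive, so from w^-1 b = -d and
   w^-1 s_a b = -g with g in h we get g = d + m w^-1 a, i.e. d precedes g; as the complement
   of h is upward closed, d lies in h. *)

lemma reflection_reflection [simp]: "reflection a (reflection a x) = x"
proof (cases "a = 0")
  case False
  then show ?thesis
    by (simp add: reflection_def inner_diff_left algebra_simps)
qed (simp add: reflection_def)

lemma reflection_self: "reflection a a = - a"
  by (cases "a = 0") (simp_all add: reflection_def scaleR_2)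

lemma linear_reflection: "linear (reflection a)"
  by (rule linearI) (simp_all add: reflection_def inner_add_left algebra_simps add_divide_distrib)

lemma bij_reflection: "bij (reflection a)"
  by (rule involuntory_imp_bij) simp

lemma inv_reflection: "inv (reflection a) = reflection a"
  by (rule inv_unique_comp) auto

lemma inv_reflection_comp: "bij w \<Longrightarrow> inv (reflection a \<circ> w) = inv w \<circ> reflection a"
  by (metis o_inv_distrib bij_reflection inv_reflection)

lemma weyl_group_linear_bij:
  assumes "w \<in> weyl_group \<Phi>"
  shows "linear w \<and> bij w"
  using assms
proof (induction rule: weyl_group.induct)
  case id
  then show ?case by (simp add: id_def[symmetric] linear_id)
next
  case (step w a)
  then show ?case using linear_reflection bij_reflection linear_compose bij_comp by blast
qed

lemma finite_base:
  "crystallographic_root_system \<Phi> \<Longrightarrow> is_base \<Phi> \<Delta> \<Longrightarrow> finite \<Delta>"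
  unfolding crystallographic_root_system_def is_base_def using finite_subset by blast

lemma pos_root_plus_nonneg_multiple_not_neg_root:
  assumes cr: "crystallographic_root_system \<Phi>" and base: "is_base \<Phi> \<Delta>"
    and \<beta>: "\<beta> \<in> pos_roots \<Phi> \<Delta>" and \<alpha>: "\<alpha> \<in> pos_roots \<Phi> \<Delta>" and "(k::int) \<ge> 0"
  shows "\<beta> + of_int k *\<^sub>R \<alpha> \<notin> neg_roots \<Phi> \<Delta>"
proof
  assume "\<beta> + of_int k *\<^sub>R \<alpha> \<in> neg_roots \<Phi> \<Delta>"
  then obtain p where p: "p \<in> pos_roots \<Phi> \<Delta>" and sum0: "p + \<beta> + of_int k *\<^sub>R \<alpha> = 0"
    unfolding neg_roots_def by (auto simp: algebra_simps)
  obtain cp where cp: "p = (\<Sum>a\<in>\<Delta>. of_int (cp a) *\<^sub>R a)" "\<forall>a\<in>\<Delta>. cp a \<ge> 0" "p \<in> \<Phi>"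
    using p unfolding pos_roots_def by blast
  obtain cb where cb: "\<beta> = (\<Sum>a\<in>\<Delta>. of_int (cb a) *\<^sub>R a)" "\<forall>a\<in>\<Delta>. cb a \<ge> 0"
    using \<beta> unfolding pos_roots_def by blast
  obtain ca where ca: "\<alpha> = (\<Sum>a\<in>\<Delta>. of_int (ca a) *\<^sub>R a)" "\<forall>a\<in>\<Delta>. ca a \<ge> 0"
    using \<alpha> unfolding pos_roots_def by blast
  let ?u = "\<lambda>a. real_of_int (cp a + cb a + k * ca a)"
  have "(\<Sum>a\<in>\<Delta>. ?u a *\<^sub>R a) = p + \<beta> + of_int k *\<^sub>R \<alpha>"
    by (simp add: cp(1) cb(1) ca(1) scaleR_add_left sum.distrib scaleR_sum_right)
  with sum0 have "\<forall>a\<in>\<Delta>. ?u a = 0"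
    using base finite_base[OF cr base] by (auto simp: is_base_def dependent_finite)
  then have "\<forall>a\<in>\<Delta>. cp a = 0"
    using cp(2) cb(2) ca(2) \<open>k \<ge> 0\<close>
    by (smt (verit, ccfv_SIG) of_int_eq_0_iff zero_le_mult_iff)
  then have "p = 0" using cp(1) by simp
  with cp(3) cr show False unfolding crystallographic_root_system_def by blast
qed

lemma reflection_to_neg_root:
  assumes cr: "crystallographic_root_system \<Phi>" and base: "is_base \<Phi> \<Delta>"
    and \<alpha>: "\<alpha> \<in> pos_roots \<Phi> \<Delta>" and \<beta>: "\<beta> \<in> pos_roots \<Phi> \<Delta>"
    and neg: "reflection \<alpha> \<beta> \<in> neg_roots \<Phi> \<Delta>"
  obtains n :: nat where "n \<ge> 1" "reflection \<alpha> \<beta> = \<beta> - of_nat n *\<^sub>R \<alpha>"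
proof -
  have "\<alpha> \<in> \<Phi>" "\<beta> \<in> \<Phi>" using \<alpha> \<beta> unfolding pos_roots_def by auto
  then obtain m where "2 * (\<beta> \<bullet> \<alpha>) / (\<alpha> \<bullet> \<alpha>) = of_int m"
    using cr unfolding crystallographic_root_system_def by (meson Ints_cases)
  then have m: "reflection \<alpha> \<beta> = \<beta> + of_int (- m) *\<^sub>R \<alpha>"
    by (simp add: reflection_def)
  have "m \<ge> 1"
    using pos_root_plus_nonneg_multiple_not_neg_root[OF cr base \<beta> \<alpha>, of "- m"] neg m
    by fastforce
  with m show thesis
    by (intro that[of "nat m"]) auto
qed

lemma bruhat_edge_inv_pos_root:
  assumes "bruhat_edge \<Phi> \<Delta> \<alpha> w" and "linear w" and "bij w"
  shows "inv w \<alpha> \<in> pos_roots \<Phi> \<Delta>"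
proof -
  have "linear (inv w)"
    using assms(2,3) inj_linear_imp_inv_linear bij_is_inj by blast
  then have "inv (reflection \<alpha> \<circ> w) \<alpha> = - inv w \<alpha>"
    by (simp add: inv_reflection_comp[OF assms(3)] reflection_self linear_neg)
  with assms(1) show ?thesis
    unfolding bruhat_edge_def neg_roots_def by (metis image_iff minus_minus)
qed

lemma root_prec_add_multiple:
  "\<gamma> \<in> pos_roots \<Phi> \<Delta> \<Longrightarrow> root_prec \<Phi> \<Delta> \<delta> (\<delta> + of_nat n *\<^sub>R \<gamma>)"
  unfolding root_prec_def
  by (intro exI[of _ "replicate n \<gamma>"]) (induction n, auto simp: algebra_simps)

lemma hessenberg_set_down_closed:
  assumes "hessenberg_set \<Phi> \<Delta> h" and "\<gamma> \<in> h" and "\<delta> \<in> pos_roots \<Phi> \<Delta>"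
    and "root_prec \<Phi> \<Delta> \<delta> \<gamma>"
  shows "\<delta> \<in> h"
  using assms unfolding hessenberg_set_def by blast

lemma hess_inv_set_reflection_comp_iff:
  assumes "bij w" and "\<beta> \<in> pos_roots \<Phi> \<Delta>" and "reflection \<alpha> \<beta> \<in> pos_roots \<Phi> \<Delta>"
  shows "\<beta> \<in> hess_inv_set \<Phi> \<Delta> h (reflection \<alpha> \<circ> w)
           \<longleftrightarrow> reflection \<alpha> \<beta> \<in> hess_inv_set \<Phi> \<Delta> h w"
  using assms by (simp add: hess_inv_set_def inv_reflection_comp)

lemma hess_inv_set_reflection_comp_to_neg_root:
  assumes cr: "crystallographic_root_system \<Phi>" and base: "is_base \<Phi> \<Delta>"
    and hess: "hessenberg_set \<Phi> \<Delta> h"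
    and "linear w" and "bij w" and edge: "bruhat_edge \<Phi> \<Delta> \<alpha> w"
    and \<beta>w: "\<beta> \<in> inv_set \<Phi> \<Delta> w" and neg: "reflection \<alpha> \<beta> \<in> neg_roots \<Phi> \<Delta>"
    and \<beta>v: "\<beta> \<in> hess_inv_set \<Phi> \<Delta> h (reflection \<alpha> \<circ> w)"
  shows "\<beta> \<in> hess_inv_set \<Phi> \<Delta> h w"
proof -
  have \<alpha>: "\<alpha> \<in> pos_roots \<Phi> \<Delta>" using edge unfolding bruhat_edge_def by blast
  have \<beta>: "\<beta> \<in> pos_roots \<Phi> \<Delta>" using \<beta>w unfolding inv_set_def by blast
  obtain n :: nat where "n \<ge> 1" and n: "reflection \<alpha> \<beta> = \<beta> - of_nat n *\<^sub>R \<alpha>"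
    using reflection_to_neg_root[OF cr base \<alpha> \<beta> neg] .
  obtain \<delta> where \<delta>: "\<delta> \<in> pos_roots \<Phi> \<Delta>" "inv w \<beta> = - \<delta>"
    using \<beta>w unfolding inv_set_def neg_roots_def by blast
  obtain \<gamma> where \<gamma>: "\<gamma> \<in> h" "inv w (reflection \<alpha> \<beta>) = - \<gamma>"
    using \<beta>v by (auto simp: hess_inv_set_def inv_reflection_comp[OF \<open>bij w\<close>])
  have "linear (inv w)"
    using \<open>linear w\<close> \<open>bij w\<close> inj_linear_imp_inv_linear bij_is_inj by blast
  then have "inv w (reflection \<alpha> \<beta>) = inv w \<beta> - of_nat n *\<^sub>R inv w \<alpha>"
    by (simp add: n linear_diff linear_scale)
  then have "\<gamma> = \<delta> + of_nat n *\<^sub>R inv w \<alpha>"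
    using \<gamma>(2) \<delta>(2) by (simp add: algebra_simps)
  then have "root_prec \<Phi> \<Delta> \<delta> \<gamma>"
    using root_prec_add_multiple bruhat_edge_inv_pos_root[OF edge \<open>linear w\<close> \<open>bij w\<close>] by simp
  then have "\<delta> \<in> h"
    using hessenberg_set_down_closed[OF hess \<gamma>(1) \<delta>(1)] by blast
  with \<beta> \<delta>(2) show ?thesis unfolding hess_inv_set_def by auto
qed

theorem proposition2p9:
  fixes \<Phi> \<Delta> h :: "'a::euclidean_space set" and w v :: "'a \<Rightarrow> 'a" and \<alpha> \<beta> :: 'a
  assumes "crystallographic_root_system \<Phi>"
    and "is_base \<Phi> \<Delta>"
    and "hessenberg_set \<Phi> \<Delta> h"
    and "w \<in> weyl_group \<Phi>" and "v \<in> weyl_group \<Phi>"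
    and "is_cover \<Phi> \<Delta> v \<alpha> w"
    and "\<beta> \<in> inv_set \<Phi> \<Delta> v"
  shows "(\<beta> \<in> reflection \<alpha> ` inv_set \<Phi> \<Delta> w \<inter> pos_roots \<Phi> \<Delta> \<longrightarrow>
            (\<beta> \<in> hess_inv_set \<Phi> \<Delta> h v \<longleftrightarrow> reflection \<alpha> \<beta> \<in> hess_inv_set \<Phi> \<Delta> h w))
       \<and> (\<beta> \<in> inv_set \<Phi> \<Delta> w \<inter> reflection \<alpha> ` neg_roots \<Phi> \<Delta> \<and> \<beta> \<in> hess_inv_set \<Phi> \<Delta> h v \<longrightarrow>
            \<beta> \<in> hess_inv_set \<Phi> \<Delta> h w)"
proof -
  have w: "linear w" "bij w" using weyl_group_linear_bij[OF assms(4)] by auto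
  have v: "v = reflection \<alpha> \<circ> w" and edge: "bruhat_edge \<Phi> \<Delta> \<alpha> w"
    using assms(6) unfolding is_cover_def by auto
  have part1: "\<beta> \<in> hess_inv_set \<Phi> \<Delta> h v \<longleftrightarrow> reflection \<alpha> \<beta> \<in> hess_inv_set \<Phi> \<Delta> h w"
    if "\<beta> \<in> reflection \<alpha> ` inv_set \<Phi> \<Delta> w \<inter> pos_roots \<Phi> \<Delta>"
    using that hess_inv_set_reflection_comp_iff[OF w(2)]
    by (auto simp: v inv_set_def)
  have part2: "\<beta> \<in> hess_inv_set \<Phi> \<Delta> h w"
    if "\<beta> \<in> inv_set \<Phi> \<Delta> w" "\<beta> \<in> reflection \<alpha> ` neg_roots \<Phi> \<Delta>" "\<beta> \<in> hess_inv_set \<Phi> \<Delta> h v"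
    using that hess_inv_set_reflection_comp_to_neg_root[OF assms(1-3) w edge]
    by (auto simp: v)
  show ?thesis using part1 part2 by blast
qed

end
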